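(* If the Cartesian product $\prod_{\alpha\in\Lambda}X_\alpha$ (with the product topology) is locally Menger, then $X_\alpha$ is Menger for all but finitely many $\alpha\in\Lambda$.
   Context: A space $X$ is Menger if for each sequence $(\mathcal{U}_n)$ of open covers of $X$ there is a sequence $(\mathcal{V}_n)$ with each $\mathcal{V}_n$ a finite subset of $\mathcal{U}_n$ and $\bigcup_{n}\bigcup\mathcal{V}_n=X$. A space $X$ is locally Menger if for each $x\in X$ there exist an open set $U$ and a Menger subspace $Y$ of $X$ with $x\in U\subseteq Y$. *)

theory Defs
  imports "HOL-Analysis.Analysis"
begin

definition menger_space :: "'a topology \<Rightarrow> bool" where
  "menger_space X \<longleftrightarrow>
     (\<forall>\<U> :: nat \<Rightarrow> 'a set set.
        (\<forall>n. (\<forall>U\<in>\<U> n. openin X U) \<and> topspace X \<subseteq> \<Union>(\<U> n)) \<longrightarrow>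
        (\<exists>\<V> :: nat \<Rightarrow> 'a set set.
           (\<forall>n. finite (\<V> n) \<and> \<V> n \<subseteq> \<U> n) \<and>
           topspace X \<subseteq> (\<Union>n. \<Union>(\<V> n))))"

definition locally_menger_space :: "'a topology \<Rightarrow> bool" where
  "locally_menger_space X \<longleftrightarrow>
     (\<forall>x\<in>topspace X. \<exists>U Y. openin X U \<and> x \<in> U \<and> U \<subseteq> Y \<and> Y \<subseteq> topspace X \<and>
        menger_space (subtopology X Y))"

end

theory Submission
  imports Defs
begin

text \<open>Since all factors are nonempty, some point of the product has a basic open
neighbourhood \<open>\<Pi>\<^sub>E \<alpha>\<in>\<Lambda>. U \<alpha>\<close> inside a Menger subspace \<open>Y\<close>, and \<open>U \<alpha>\<close> is the whole
factor \<open>X \<alpha>\<close> for all but finitely many \<open>\<alpha>\<close>. For each such \<open>\<alpha>\<close> the projection maps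
\<open>Y\<close> onto \<open>X \<alpha>\<close>, and continuous images of Menger spaces are Menger.\<close>

lemma menger_spaceD:
  fixes \<U> :: "nat \<Rightarrow> 'a set set"
  assumes "menger_space X" "\<And>n. (\<forall>U\<in>\<U> n. openin X U) \<and> topspace X \<subseteq> \<Union>(\<U> n)"
  obtains \<V> where "\<And>n. finite (\<V> n) \<and> \<V> n \<subseteq> \<U> n" "topspace X \<subseteq> (\<Union>n. \<Union>(\<V> n))"
  using assms unfolding menger_space_def by metis

lemma menger_space_continuous_map_image:
  assumes "menger_space Y" "continuous_map Y Z f" "f ` topspace Y = topspace Z"
  shows "menger_space Z"
  unfolding menger_space_def
proof (intro allI impI)
  fix \<U> :: "nat \<Rightarrow> 'b set set"
  assume \<U>: "\<forall>n. (\<forall>U\<in>\<U> n. openin Z U) \<and> topspace Z \<subseteq> \<Union>(\<U> n)"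
  define pre where "pre U = {y \<in> topspace Y. f y \<in> U}" for U
  have pre_cover: "(\<forall>V\<in>pre ` \<U> n. openin Y V) \<and> topspace Y \<subseteq> \<Union>(pre ` \<U> n)" for n
    using \<U> assms(2,3) by (fastforce simp: pre_def openin_continuous_map_preimage)
  obtain \<V> where \<V>: "\<And>n. finite (\<V> n) \<and> \<V> n \<subseteq> pre ` \<U> n"
    "topspace Y \<subseteq> (\<Union>n. \<Union>(\<V> n))"
    using menger_spaceD[where \<U>="\<lambda>n. pre ` \<U> n", OF assms(1) pre_cover] by blast
  have "\<exists>\<W>. \<W> \<subseteq> \<U> n \<and> finite \<W> \<and> \<V> n = pre ` \<W>" for n
    using \<V>(1) finite_subset_image by meson
  then obtain \<W> where \<W>: "\<And>n. \<W> n \<subseteq> \<U> n \<and> finite (\<W> n) \<and> \<V> n = pre ` \<W> n"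
    by metis
  have "topspace Z \<subseteq> (\<Union>n. \<Union>(\<W> n))"
  proof
    fix z assume "z \<in> topspace Z"
    then obtain y where "y \<in> topspace Y" "z = f y"
      using assms(3) by blast
    then obtain n V where "V \<in> \<V> n" "y \<in> V"
      using \<V>(2) by blast
    then obtain W where "W \<in> \<W> n" "y \<in> pre W"
      using \<W> by blast
    then show "z \<in> (\<Union>n. \<Union>(\<W> n))"
      using \<open>z = f y\<close> by (auto simp: pre_def)
  qed
  then show "\<exists>\<W>. (\<forall>n. finite (\<W> n) \<and> \<W> n \<subseteq> \<U> n) \<and> topspace Z \<subseteq> (\<Union>n. \<Union>(\<W> n))"
    using \<W> by (intro exI[of _ \<W>]) auto
qed

lemma menger_space_factor_of_menger_subspace:
  assumes "menger_space (subtopology (product_topology X \<Lambda>) Y)"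
    and "Y \<subseteq> topspace (product_topology X \<Lambda>)"
    and "\<alpha> \<in> \<Lambda>" "topspace (X \<alpha>) \<subseteq> (\<lambda>x. x \<alpha>) ` Y"
  shows "menger_space (X \<alpha>)"
proof (rule menger_space_continuous_map_image)
  show projection: "continuous_map (subtopology (product_topology X \<Lambda>) Y) (X \<alpha>) (\<lambda>x. x \<alpha>)"
    using assms(3) by (simp add: continuous_map_from_subtopology continuous_map_product_projection)
  show "(\<lambda>x. x \<alpha>) ` topspace (subtopology (product_topology X \<Lambda>) Y) = topspace (X \<alpha>)"
    using assms(2,4) continuous_map_image_subset_topspace[OF projection]
    by (simp add: Int_absorb1 subset_antisym)
qed (use assms(1) in simp)

theorem proposition4p4:
  fixes X :: "'i \<Rightarrow> 'a topology" and \<Lambda> :: "'i set"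
  assumes nonempty: "\<And>\<alpha>. \<alpha> \<in> \<Lambda> \<Longrightarrow> topspace (X \<alpha>) \<noteq> {}"
    and "locally_menger_space (product_topology X \<Lambda>)"
  shows "finite {\<alpha> \<in> \<Lambda>. \<not> menger_space (X \<alpha>)}"
proof -
  let ?P = "product_topology X \<Lambda>"
  have "topspace ?P \<noteq> {}"
    using nonempty by (simp add: PiE_eq_empty_iff)
  then obtain x where "x \<in> topspace ?P"
    by blast
  then obtain W Y where W: "openin ?P W" "x \<in> W" "W \<subseteq> Y" "Y \<subseteq> topspace ?P"
    and menger_Y: "menger_space (subtopology ?P Y)"
    using assms(2) unfolding locally_menger_space_def by meson
  then obtain U where U: "finite {\<alpha> \<in> \<Lambda>. U \<alpha> \<noteq> topspace (X \<alpha>)}"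
    "x \<in> Pi\<^sub>E \<Lambda> U" "Pi\<^sub>E \<Lambda> U \<subseteq> W"
    unfolding openin_product_topology_alt by meson
  have "menger_space (X \<alpha>)" if "\<alpha> \<in> \<Lambda>" "U \<alpha> = topspace (X \<alpha>)" for \<alpha>
  proof (rule menger_space_factor_of_menger_subspace[OF menger_Y W(4) \<open>\<alpha> \<in> \<Lambda>\<close>])
    have "(\<lambda>x. x \<alpha>) ` Pi\<^sub>E \<Lambda> U = U \<alpha>"
      using U(2) that(1) by (auto simp: image_projection_PiE)
    then show "topspace (X \<alpha>) \<subseteq> (\<lambda>x. x \<alpha>) ` Y"
      using U(3) W(3) that(2) by blast
  qed
  then have "{\<alpha> \<in> \<Lambda>. \<not> menger_space (X \<alpha>)} \<subseteq> {\<alpha> \<in> \<Lambda>. U \<alpha> \<noteq> topspace (X \<alpha>)}"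
    by blast
  then show ?thesis
    using U(1) finite_subset by blast
qed

end
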